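(* Let $g\in\mathcal{G}_0^\infty$ be differentiable on $(0,1)$ and satisfy $\limsup_{x\to0^+}x g'(x)/g(x)<1$. Then for every $\gamma\ge0$ there exists a process $(X,\Sigma,\mu,T,\mathcal{P})$ such that $h(g,\mathcal{P})=\gamma$. Here $T$ is a measure-preserving automorphism of a probability space $(X,\Sigma,\mu)$ and $\mathcal{P}$ is a finite measurable partition.
   Context: $\mathcal{G}_0$ is the set of concave functions $g:[0,1]\to\mathbb{R}$ with $g(0)=\lim_{x\to0^+}g(x)=0$. Let $\eta(x)=-x\log x$ and $\eta(0)=0$. Define $\mathcal{G}_0^\infty=\{g\in\mathcal{G}_0:\lim_{x\to0^+}g(x)/\eta(x)=\infty\}$. For a finite measurable partition $\mathcal{P}$, let $\mathcal{P}_n=\bigvee_{i=0}^{n-1}T^{-i}\mathcal{P}$, $H(g,\mathcal{P})=\sum_{A\in\mathcal{P}}g(\mu(A))$, and $h(g,\mathcal{P})=\limsup_{n\to\infty}\frac1nH(g,\mathcal{P}_n)$. *)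

theory Defs
  imports "HOL-Probability.Probability"
begin

definition eta :: "real \<Rightarrow> real" where
  "eta x = (if x = 0 then 0 else - x * ln x)"

definition G0 :: "(real \<Rightarrow> real) set" where
  "G0 = {g. concave_on {0..1} g \<and> g 0 = 0 \<and> (g \<longlongrightarrow> 0) (at_right 0)}"

definition G0_inf :: "(real \<Rightarrow> real) set" where
  "G0_inf = {g \<in> G0. filterlim (\<lambda>x. g x / eta x) at_top (at_right 0)}"

definition measure_preserving_map :: "'a measure \<Rightarrow> ('a \<Rightarrow> 'a) \<Rightarrow> bool" where
  "measure_preserving_map M T \<longleftrightarrow>
     T \<in> M \<rightarrow>\<^sub>M M \<and> (\<forall>A \<in> sets M. measure M (T -` A \<inter> space M) = measure M A)"

definition mp_automorphism :: "'a measure \<Rightarrow> ('a \<Rightarrow> 'a) \<Rightarrow> bool" where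
  "mp_automorphism M T \<longleftrightarrow>
     bij_betw T (space M) (space M) \<and> measure_preserving_map M T \<and>
     measure_preserving_map M (the_inv_into (space M) T)"

definition finite_meas_partition :: "'a measure \<Rightarrow> 'a set set \<Rightarrow> bool" where
  "finite_meas_partition M P \<longleftrightarrow>
     finite P \<and> P \<subseteq> sets M \<and> disjoint P \<and> \<Union>P = space M"

definition iter_join :: "'a measure \<Rightarrow> ('a \<Rightarrow> 'a) \<Rightarrow> 'a set set \<Rightarrow> nat \<Rightarrow> 'a set set" where
  "iter_join M T P n =
     {(\<Inter>i<n. (T ^^ i) -` (A i)) \<inter> space M | A. \<forall>i<n. A i \<in> P}"

definition H_g :: "(real \<Rightarrow> real) \<Rightarrow> 'a measure \<Rightarrow> 'a set set \<Rightarrow> real" where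
  "H_g g M P = (\<Sum>A\<in>P. g (measure M A))"

definition h_g :: "(real \<Rightarrow> real) \<Rightarrow> 'a measure \<Rightarrow> ('a \<Rightarrow> 'a) \<Rightarrow> 'a set set \<Rightarrow> ereal" where
  "h_g g M T P = limsup (\<lambda>n. ereal (H_g g M (iter_join M T P n) / real n))"

end

theory Submission
  imports Defs "HOL-Probability.Product_PMF"
begin

text \<open>The process is the two-sided shift on binary sequences with the partition according to the
  zeroth coordinate, and the invariant measure is a mixture of the uniform measures on the points
  of periods m_0 < m_1 < ... with weights q_k. A cylinder of length t receives mass W / 2^t from
  the periods m_k \<ge> t, W being their total weight, while each shorter period contributes at most
  2^m_k atoms. Hence H(g, P_t) is 2^t g(W / 2^t) up to the entropy of the short periods.

  The periods and weights are chosen inductively. Since g / \<eta> \<rightarrow> \<infinity>, the quantity 2^N g(W / 2^N)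
  eventually exceeds \<gamma> N, so by continuity the tail weight can be lowered to make it equal
  to \<gamma> N at t = m_(k+1); this gives the lower bound for the limsup. The condition on
  x g'(x) / g(x) yields g(y) \<le> 2^c g(y / 2) with c < 1 near 0, so 2^t g(W / 2^t) decays
  geometrically as t decreases from m_(k+1), and H(g, P_t) / t stays below \<gamma> + 1 / k for
  m_k < t \<le> m_(k+1) once m_(k+1) is large enough. For \<gamma> = 0 the trivial partition suffices.\<close>

section \<open>The shift and its cylinder partition\<close>

definition shift :: "(int \<Rightarrow> 'a) \<Rightarrow> int \<Rightarrow> 'a" where
  "shift \<omega> = (\<lambda>i. \<omega> (i + 1))"

lemma funpow_shift: "(shift ^^ n) \<omega> = (\<lambda>i. \<omega> (i + int n))"
  by (induction n arbitrary: \<omega>) (auto simp: shift_def algebra_simps)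

lemma bij_shift: "bij shift"
  by (rule bij_betw_byWitness[where f'="\<lambda>\<omega> i. \<omega> (i - 1)"]) (auto simp: shift_def)

lemma measure_preserving_map_pmf:
  assumes "map_pmf T p = p"
  shows "measure_preserving_map (measure_pmf p) T"
  unfolding measure_preserving_map_def
proof (intro conjI ballI)
  fix A
  have "measure (measure_pmf p) (T -` A) = measure (measure_pmf (map_pmf T p)) A" by simp
  then show "measure (measure_pmf p) (T -` A \<inter> space (measure_pmf p)) = measure (measure_pmf p) A"
    using assms by simp
qed simp

lemma mp_automorphism_pmf:
  assumes "bij T" and "map_pmf T p = p"
  shows "mp_automorphism (measure_pmf p) T"
proof -
  have "the_inv_into UNIV T \<circ> T = id"
    using assms(1) by (auto simp: bij_def the_inv_into_f_f)
  then have "map_pmf (the_inv_into UNIV T) p = p"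
    by (metis assms(2) pmf.map_comp pmf.map_id)
  then show ?thesis
    using assms by (simp add: mp_automorphism_def measure_preserving_map_pmf)
qed

definition cylinder :: "nat \<Rightarrow> (nat \<Rightarrow> bool) \<Rightarrow> (int \<Rightarrow> nat) set" where
  "cylinder t b = {\<omega>. \<forall>i<t. (\<omega> (int i) = 0) = b i}"

definition zero_partition :: "(int \<Rightarrow> nat) set set" where
  "zero_partition = {{\<omega>. \<omega> 0 = 0}, {\<omega>. \<omega> 0 \<noteq> 0}}"

lemma finite_meas_partition_zero_partition: "finite_meas_partition (measure_pmf p) zero_partition"
  unfolding finite_meas_partition_def zero_partition_def disjoint_def by auto

lemma cylinder_antimono: "s \<le> t \<Longrightarrow> cylinder t b \<subseteq> cylinder s b"
  unfolding cylinder_def by auto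

lemma disjoint_cylinders:
  assumes "b \<in> {..<t} \<rightarrow>\<^sub>E UNIV" "b' \<in> {..<t} \<rightarrow>\<^sub>E UNIV" "b \<noteq> b'"
  shows "cylinder t b \<inter> cylinder t b' = {}"
proof -
  obtain i where "i < t" "b i \<noteq> b' i"
    using assms by (auto simp: PiE_def extensional_def fun_eq_iff)
  then show ?thesis by (auto simp: cylinder_def)
qed

lemma inj_on_cylinder: "inj_on (cylinder t) ({..<t} \<rightarrow>\<^sub>E UNIV)"
proof (rule inj_onI)
  fix b b' assume b: "b \<in> {..<t} \<rightarrow>\<^sub>E UNIV" "b' \<in> {..<t} \<rightarrow>\<^sub>E UNIV"
    and eq: "cylinder t b = cylinder t b'"
  have "(\<lambda>j. if b (nat j) then 0 else 1) \<in> cylinder t b" by (auto simp: cylinder_def)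
  then show "b = b'" using disjoint_cylinders[OF b] eq by blast
qed

lemma iter_join_zero_partition:
  "iter_join (measure_pmf p) shift zero_partition t = cylinder t ` ({..<t} \<rightarrow>\<^sub>E UNIV)"
proof (intro equalityI subsetI)
  fix S assume "S \<in> iter_join (measure_pmf p) shift zero_partition t"
  then obtain A where A: "\<forall>i<t. A i \<in> zero_partition"
    and S: "S = (\<Inter>i<t. (shift ^^ i) -` A i) \<inter> UNIV"
    by (auto simp: iter_join_def)
  define b where "b = restrict (\<lambda>i. A i = {\<omega>. \<omega> 0 = 0}) {..<t}"
  have "\<forall>i<t. (shift ^^ i) -` A i = {\<omega>. (\<omega> (int i) = 0) = b i}"
    using A by (auto simp: zero_partition_def b_def funpow_shift)
  then have "S = cylinder t b" unfolding S cylinder_def by auto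
  then show "S \<in> cylinder t ` ({..<t} \<rightarrow>\<^sub>E UNIV)" by (auto simp: b_def)
next
  fix S assume "S \<in> cylinder t ` ({..<t} \<rightarrow>\<^sub>E UNIV)"
  then obtain b where b: "S = cylinder t b" by auto
  define A :: "nat \<Rightarrow> (int \<Rightarrow> nat) set"
    where "A i = (if b i then {\<omega>. \<omega> 0 = 0} else {\<omega>. \<omega> 0 \<noteq> 0})" for i
  have "\<forall>i<t. (shift ^^ i) -` A i = {\<omega>. (\<omega> (int i) = 0) = b i}"
    by (auto simp: A_def funpow_shift)
  then have "S = (\<Inter>i<t. (shift ^^ i) -` A i) \<inter> space (measure_pmf p)"
    unfolding b cylinder_def by auto
  moreover have "\<forall>i<t. A i \<in> zero_partition" by (auto simp: A_def zero_partition_def)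
  ultimately show "S \<in> iter_join (measure_pmf p) shift zero_partition t"
    unfolding iter_join_def by blast
qed

definition cylinder_entropy :: "(real \<Rightarrow> real) \<Rightarrow> (int \<Rightarrow> nat) pmf \<Rightarrow> nat \<Rightarrow> real" where
  "cylinder_entropy g p t = (\<Sum>b\<in>{..<t} \<rightarrow>\<^sub>E UNIV. g (measure p (cylinder t b)))"

lemma H_g_zero_partition:
  "H_g g (measure_pmf p) (iter_join (measure_pmf p) shift zero_partition t) =
     cylinder_entropy g p t"
  unfolding H_g_def iter_join_zero_partition cylinder_entropy_def
  by (rule sum.reindex[OF inj_on_cylinder, unfolded comp_def])


section \<open>Uniform measures on periodic points\<close>

definition uniform_entropy :: "(real \<Rightarrow> real) \<Rightarrow> real \<Rightarrow> nat \<Rightarrow> real" where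
  "uniform_entropy g w t = 2 ^ t * g (w / 2 ^ t)"

definition periodic_ext :: "nat \<Rightarrow> (nat \<Rightarrow> 'a) \<Rightarrow> int \<Rightarrow> 'a" where
  "periodic_ext m y = (\<lambda>i. y (nat (i mod int m)))"

definition binary_words :: "nat \<Rightarrow> (nat \<Rightarrow> nat) set" where
  "binary_words m = PiE_dflt {..<m} 0 (\<lambda>_. {0, 1})"

definition periodic_points :: "nat \<Rightarrow> (int \<Rightarrow> nat) set" where
  "periodic_points m = periodic_ext m ` binary_words m"

definition periodic_pmf :: "nat \<Rightarrow> (int \<Rightarrow> nat) pmf" where
  "periodic_pmf m = pmf_of_set (periodic_points m)"

lemma finite_binary_words: "finite (binary_words m)"
  unfolding binary_words_def by auto

lemma card_binary_words: "card (binary_words m) = 2 ^ m"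
  unfolding binary_words_def by (subst card_PiE_dflt) (auto simp: numeral_2_eq_2)

lemma binary_words_nonempty: "binary_words m \<noteq> {}"
  unfolding binary_words_def by simp

lemma periodic_ext_of_nat: "i < m \<Longrightarrow> periodic_ext m y (int i) = y i"
  unfolding periodic_ext_def by simp

lemma inj_on_periodic_ext: "inj_on (periodic_ext m) (binary_words m)"
proof (rule inj_onI)
  fix x y assume "x \<in> binary_words m" "y \<in> binary_words m"
    and eq: "periodic_ext m x = periodic_ext m y"
  show "x = y"
  proof
    fix j show "x j = y j"
    proof (cases "j < m")
      case True
      then show ?thesis using eq periodic_ext_of_nat[of j m] by metis
    next
      case False
      then show ?thesis using \<open>x \<in> binary_words m\<close> \<open>y \<in> binary_words m\<close>
        by (auto simp: binary_words_def PiE_dflt_def)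
    qed
  qed
qed

lemma finite_periodic_points: "finite (periodic_points m)"
  unfolding periodic_points_def using finite_binary_words by auto

lemma card_periodic_points: "card (periodic_points m) = 2 ^ m"
  unfolding periodic_points_def by (simp add: card_image inj_on_periodic_ext card_binary_words)

lemma periodic_points_nonempty: "periodic_points m \<noteq> {}"
  unfolding periodic_points_def using binary_words_nonempty by auto

lemma shift_periodic_ext:
  assumes "m > 0"
  shows "shift (periodic_ext m y) = periodic_ext m (\<lambda>j. if j < m then y ((j + 1) mod m) else y j)"
proof
  fix i
  have r: "0 \<le> i mod int m" "i mod int m < int m" using assms by auto
  have "(i + 1) mod int m = (i mod int m + 1) mod int m" by (simp add: mod_add_left_eq)
  also have "\<dots> = int ((nat (i mod int m) + 1) mod m)" using r by (simp add: of_nat_mod add.commute)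
  finally have "nat ((i + 1) mod int m) = (nat (i mod int m) + 1) mod m" by simp
  moreover have "nat (i mod int m) < m" using assms by (simp add: nat_less_iff)
  ultimately show
    "shift (periodic_ext m y) i = periodic_ext m (\<lambda>j. if j < m then y ((j + 1) mod m) else y j) i"
    by (simp add: shift_def periodic_ext_def)
qed

lemma shift_periodic_points:
  assumes "m > 0"
  shows "shift ` periodic_points m = periodic_points m"
proof (rule card_subset_eq[OF finite_periodic_points])
  show "shift ` periodic_points m \<subseteq> periodic_points m"
    using assms unfolding periodic_points_def
    by (auto simp: shift_periodic_ext binary_words_def PiE_dflt_def)
  show "card (shift ` periodic_points m) = card (periodic_points m)"
    by (meson bij_betw_imp_inj_on bij_shift card_image inj_on_subset subset_UNIV)
qed

lemma map_shift_periodic_pmf: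
  assumes "m > 0"
  shows "map_pmf shift (periodic_pmf m) = periodic_pmf m"
  using bij_shift unfolding periodic_pmf_def bij_def
  by (subst map_pmf_of_set_inj)
     (auto simp: shift_periodic_points[OF assms] periodic_points_nonempty finite_periodic_points
           intro: inj_on_subset)

lemma periodic_pmf_eq_Pi_pmf:
  "periodic_pmf m = map_pmf (periodic_ext m) (Pi_pmf {..<m} 0 (\<lambda>_. pmf_of_set {0, 1}))"
proof -
  have "Pi_pmf {..<m} 0 (\<lambda>_. pmf_of_set {0, 1::nat}) = pmf_of_set (binary_words m)"
    unfolding binary_words_def by (rule Pi_pmf_of_set) auto
  then show ?thesis unfolding periodic_pmf_def periodic_points_def
    by (simp add: map_pmf_of_set_inj inj_on_periodic_ext binary_words_nonempty finite_binary_words)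
qed

lemma measure_periodic_pmf_cylinder:
  assumes "t \<le> m"
  shows "measure (periodic_pmf m) (cylinder t b) = 1 / 2 ^ t"
proof -
  define B where "B i = (if i < t then {v::nat. (v = 0) = b i} else UNIV)" for i
  have coin: "measure (pmf_of_set {0, 1::nat}) {v. (v = 0) = c} = 1 / 2" for c
    by (cases c) (auto simp: measure_pmf_of_set)
  have "periodic_ext m -` cylinder t b = Pi {..<m} B"
    using assms by (auto simp: cylinder_def B_def periodic_ext_of_nat Pi_def)
  then have "measure (periodic_pmf m) (cylinder t b)
      = measure (Pi_pmf {..<m} 0 (\<lambda>_. pmf_of_set {0, 1})) (Pi {..<m} B)"
    by (simp add: periodic_pmf_eq_Pi_pmf)
  also have "\<dots> = (\<Prod>i<m. measure (pmf_of_set {0, 1::nat}) (B i))"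
    by (rule measure_Pi_pmf_Pi) simp
  also have "\<dots> = (\<Prod>i<m. if i < t then 1 / 2 else 1)"
  proof (rule prod.cong)
    fix i show "measure (pmf_of_set {0, 1::nat}) (B i) = (if i < t then 1 / 2 else 1)"
      using coin[of "b i"] by (simp add: B_def)
  qed simp
  also have "\<dots> = (\<Prod>i<t. 1 / 2 :: real)"
    using assms by (subst prod.mono_neutral_right[of "{..<m}" "{..<t}"]) auto
  finally show ?thesis by (simp add: power_one_over)
qed

lemma measure_periodic_pmf_cylinder_le:
  "measure (periodic_pmf m) (cylinder t b) \<le> 1 / 2 ^ min t m"
proof (cases "t \<le> m")
  case False
  then have "measure (periodic_pmf m) (cylinder t b) \<le> measure (periodic_pmf m) (cylinder m b)"
    by (intro measure_pmf.finite_measure_mono cylinder_antimono) auto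
  then show ?thesis using False measure_periodic_pmf_cylinder[of m m b] by simp
qed (simp add: measure_periodic_pmf_cylinder)

lemma card_periodic_points_cylinder_le:
  assumes "m \<le> t"
  shows "card (periodic_points m \<inter> cylinder t b) \<le> 1"
proof -
  have "x = y" if x: "x \<in> periodic_points m \<inter> cylinder t b"
    and y: "y \<in> periodic_points m \<inter> cylinder t b" for x y
  proof -
    obtain u v where u: "u \<in> binary_words m" "x = periodic_ext m u"
      and v: "v \<in> binary_words m" "y = periodic_ext m v"
      using x y by (auto simp: periodic_points_def)
    have "u j = v j" for j
    proof (cases "j < m")
      case True
      have "u j \<in> {0, 1}" "v j \<in> {0, 1}"
        using u v True by (auto simp: binary_words_def PiE_dflt_def)
      moreover have "(x (int j) = 0) = b j" "(y (int j) = 0) = b j"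
        using x y True assms by (auto simp: cylinder_def)
      moreover have "x (int j) = u j" "y (int j) = v j"
        using u v True by (auto simp: periodic_ext_of_nat)
      ultimately show ?thesis by auto
    next
      case False
      then show ?thesis using u v by (auto simp: binary_words_def PiE_dflt_def)
    qed
    then have "u = v" by (simp add: fun_eq_iff)
    with u v show "x = y" by simp
  qed
  then show ?thesis
    by (metis card_le_Suc0_iff_eq finite_Int finite_periodic_points One_nat_def)
qed

text \<open>Each cylinder of length at least m carries either nothing or a single atom of mass
  w / 2^m, and there are at most 2^m such atoms.\<close>
lemma periodic_pmf_cylinder_entropy_le:
  fixes g :: "real \<Rightarrow> real"
  assumes mono: "\<And>x y. 0 \<le> x \<Longrightarrow> x \<le> y \<Longrightarrow> y \<le> w / 2 ^ m \<Longrightarrow> g x \<le> g y"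
    and "g 0 = 0" and "m \<le> t" and "0 \<le> w"
  shows "(\<Sum>b\<in>{..<t} \<rightarrow>\<^sub>E UNIV. g (w * measure (periodic_pmf m) (cylinder t b)))
    \<le> uniform_entropy g w m"
proof -
  define c where "c b = card (periodic_points m \<inter> cylinder t b)" for b
  have c01: "c b = 0 \<or> c b = 1" for b
    using card_periodic_points_cylinder_le[OF \<open>m \<le> t\<close>, of b] by (auto simp: c_def)
  have "measure (periodic_pmf m) (cylinder t b) = real (c b) / 2 ^ m" for b
    unfolding periodic_pmf_def c_def
    by (subst measure_pmf_of_set)
       (auto simp: periodic_points_nonempty finite_periodic_points card_periodic_points)
  then have eq: "g (w * measure (periodic_pmf m) (cylinder t b)) = real (c b) * g (w / 2 ^ m)" for b
    using c01[of b] \<open>g 0 = 0\<close> by auto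
  have "(\<Sum>b\<in>{..<t} \<rightarrow>\<^sub>E UNIV. real (c b)) =
      card (\<Union>b\<in>{..<t} \<rightarrow>\<^sub>E UNIV. periodic_points m \<inter> cylinder t b)"
    unfolding c_def
    by (subst card_UN_disjoint) (auto simp: finite_periodic_points intro: finite_PiE dest: disjoint_cylinders)
  also have "\<dots> \<le> card (periodic_points m)"
    by (intro of_nat_mono card_mono finite_periodic_points) auto
  finally have "(\<Sum>b\<in>{..<t} \<rightarrow>\<^sub>E UNIV. real (c b)) \<le> 2 ^ m" by (simp add: card_periodic_points)
  moreover have "0 \<le> g (w / 2 ^ m)" using mono[of 0 "w / 2 ^ m"] \<open>g 0 = 0\<close> \<open>0 \<le> w\<close> by simp
  ultimately show ?thesis
    by (simp add: eq uniform_entropy_def sum_distrib_right[symmetric] mult_right_mono)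
qed

section \<open>Mixtures of periodic measures\<close>

definition periodic_mixture :: "(nat \<Rightarrow> nat) \<Rightarrow> nat pmf \<Rightarrow> (int \<Rightarrow> nat) pmf" where
  "periodic_mixture m q = bind_pmf q (\<lambda>k. periodic_pmf (m k))"

lemma measure_bind_pmf:
  "measure (bind_pmf q F) A = (\<integral>k. measure (F k) A \<partial>q)"
proof -
  have int: "integrable q (\<lambda>k. measure (F k) A)"
    by (rule measure_pmf.integrable_const_bound[where B=1]) auto
  have "emeasure (bind_pmf q F) A = (\<integral>\<^sup>+k. ennreal (measure (F k) A) \<partial>q)"
    unfolding emeasure_bind_pmf by (simp add: measure_pmf.emeasure_eq_measure)
  also have "\<dots> = ennreal (\<integral>k. measure (F k) A \<partial>q)"
    by (rule nn_integral_eq_integral[OF int]) auto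
  finally show ?thesis
    by (simp add: measure_pmf.emeasure_eq_measure integral_nonneg_AE)
qed

lemma map_shift_periodic_mixture:
  assumes "\<And>k. m k > 0"
  shows "map_pmf shift (periodic_mixture m q) = periodic_mixture m q"
  unfolding periodic_mixture_def map_bind_pmf using map_shift_periodic_pmf[OF assms] by simp

lemma finite_strict_mono_below:
  fixes m :: "nat \<Rightarrow> nat"
  assumes "strict_mono m"
  shows "finite {k. m k < t}"
proof (rule finite_subset[of _ "{..<t}"])
  show "{k. m k < t} \<subseteq> {..<t}" using seq_suble[OF assms] by (auto intro: le_less_trans)
qed simp

text \<open>Periods of length at least t look uniform on cylinders of length t.\<close>
lemma measure_periodic_mixture_cylinder:
  assumes "strict_mono m"
  shows "measure (periodic_mixture m q) (cylinder t b) =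
    measure q {k. t \<le> m k} / 2 ^ t +
    (\<Sum>k | m k < t. pmf q k * measure (periodic_pmf (m k)) (cylinder t b))"
proof -
  define f where "f k = measure (periodic_pmf (m k)) (cylinder t b)" for k
  define S where "S = {k. t \<le> m k}"
  have f: "f k = indicator S k * (1 / 2 ^ t) + (if m k < t then f k else 0)" for k
    by (auto simp: f_def S_def measure_periodic_pmf_cylinder indicator_def)
  have "integrable q (\<lambda>k. indicator S k * (1 / 2 ^ t :: real))"
    "integrable q (\<lambda>k. if m k < t then f k else 0)"
    by (auto intro!: measure_pmf.integrable_const_bound[where B=1] simp: indicator_def f_def)
  then have "(\<integral>k. f k \<partial>q) =
      (\<integral>k. indicator S k * (1 / 2 ^ t) \<partial>q) + (\<integral>k. (if m k < t then f k else 0) \<partial>q)"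
    by (subst f) (rule Bochner_Integration.integral_add)
  also have "(\<integral>k. (if m k < t then f k else 0) \<partial>q) = (\<Sum>k | m k < t. pmf q k * f k)"
    by (subst integral_measure_pmf[OF finite_strict_mono_below[OF assms]])
       (auto split: if_splits intro: sum.cong)
  finally show ?thesis
    unfolding periodic_mixture_def measure_bind_pmf f_def S_def by simp
qed

lemma measure_periodic_mixture_cylinder_le:
  assumes "strict_mono m" and "m 0 \<le> t"
  shows "measure (periodic_mixture m q) (cylinder t b) \<le> 1 / 2 ^ m 0"
proof -
  have "measure (periodic_pmf (m k)) (cylinder t b) \<le> 1 / 2 ^ m 0" for k
  proof -
    have "m 0 \<le> min t (m k)" using assms by (simp add: strict_mono_less_eq)
    then have "1 / 2 ^ min t (m k) \<le> (1 / 2 ^ m 0 :: real)" by (simp add: frac_le)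
    then show ?thesis using measure_periodic_pmf_cylinder_le[of "m k" t b] by linarith
  qed
  then have "(\<integral>k. measure (periodic_pmf (m k)) (cylinder t b) \<partial>q) \<le> (\<integral>k. 1 / 2 ^ m 0 \<partial>q)"
    by (intro integral_mono measure_pmf.integrable_const_bound[where B=1]) auto
  then show ?thesis unfolding periodic_mixture_def measure_bind_pmf by simp
qed

lemma subadditive_sum:
  fixes g :: "real \<Rightarrow> real"
  assumes subadd: "\<And>x y. 0 \<le> x \<Longrightarrow> 0 \<le> y \<Longrightarrow> x + y \<le> e \<Longrightarrow> g (x + y) \<le> g x + g y"
    and "finite F" "\<forall>k\<in>F. 0 \<le> x k" "0 \<le> a" "a + sum x F \<le> e"
  shows "g (a + sum x F) \<le> g a + (\<Sum>k\<in>F. g (x k))"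
  using assms(2-)
proof (induction F rule: finite_induct)
  case (insert j F)
  have s0: "0 \<le> sum x F" using insert by (auto intro: sum_nonneg)
  have "g (a + sum x (insert j F)) = g (x j + (a + sum x F))"
    using insert by (simp add: algebra_simps)
  also have "\<dots> \<le> g (x j) + g (a + sum x F)"
    using insert s0 by (intro subadd) (auto simp: algebra_simps)
  also have "g (a + sum x F) \<le> g a + (\<Sum>k\<in>F. g (x k))"
    using insert s0 by (intro insert.IH) auto
  finally show ?case using insert by (simp add: algebra_simps)
qed simp

locale periodic_mixture_bounds =
  fixes g :: "real \<Rightarrow> real" and e :: real and m :: "nat \<Rightarrow> nat" and q :: "nat pmf"
  assumes mono: "\<And>x y. 0 \<le> x \<Longrightarrow> x \<le> y \<Longrightarrow> y \<le> e \<Longrightarrow> g x \<le> g y"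
    and g0: "g 0 = 0"
    and subadd: "\<And>x y. 0 \<le> x \<Longrightarrow> 0 \<le> y \<Longrightarrow> x + y \<le> e \<Longrightarrow> g (x + y) \<le> g x + g y"
    and strict_mono: "strict_mono m"
    and shortest_period: "1 / 2 ^ m 0 \<le> e"
begin

definition tail :: "nat \<Rightarrow> real" where
  "tail t = measure q {k. t \<le> m k}"

lemma cylinder_le_e:
  assumes "m 0 \<le> t"
  shows "measure (periodic_mixture m q) (cylinder t b) \<le> e"
  using measure_periodic_mixture_cylinder_le[OF strict_mono assms, of q b] shortest_period
  by linarith

lemma cylinder_entropy_lower:
  assumes "m 0 \<le> t"
  shows "uniform_entropy g (tail t) t \<le> cylinder_entropy g (periodic_mixture m q) t"
proof -
  have le: "g (tail t / 2 ^ t) \<le> g (measure (periodic_mixture m q) (cylinder t b))" for b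
    using cylinder_le_e[OF assms, of b]
    by (intro mono)
       (auto simp: tail_def measure_periodic_mixture_cylinder[OF strict_mono] sum_nonneg)
  have "(\<Sum>b\<in>{..<t} \<rightarrow>\<^sub>E (UNIV :: bool set). g (tail t / 2 ^ t))
      \<le> cylinder_entropy g (periodic_mixture m q) t"
    unfolding cylinder_entropy_def by (intro sum_mono le)
  then show ?thesis by (simp add: uniform_entropy_def card_PiE)
qed

lemma cylinder_entropy_upper:
  assumes "m 0 \<le> t"
  shows "cylinder_entropy g (periodic_mixture m q) t \<le>
     uniform_entropy g (tail t) t + (\<Sum>k | m k < t. uniform_entropy g (pmf q k) (m k))"
proof -
  define x where "x b k = pmf q k * measure (periodic_pmf (m k)) (cylinder t b)" for b k
  have le: "g (measure (periodic_mixture m q) (cylinder t b))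
      \<le> g (tail t / 2 ^ t) + (\<Sum>k | m k < t. g (x b k))" for b
    using cylinder_le_e[OF assms, of b]
    unfolding measure_periodic_mixture_cylinder[OF strict_mono] tail_def x_def
    by (intro subadditive_sum[OF subadd] finite_strict_mono_below[OF strict_mono]) auto
  have "cylinder_entropy g (periodic_mixture m q) t \<le>
      (\<Sum>b\<in>{..<t} \<rightarrow>\<^sub>E UNIV. g (tail t / 2 ^ t) + (\<Sum>k | m k < t. g (x b k)))"
    unfolding cylinder_entropy_def by (intro sum_mono le)
  also have "\<dots> = uniform_entropy g (tail t) t + (\<Sum>k | m k < t. \<Sum>b\<in>{..<t} \<rightarrow>\<^sub>E UNIV. g (x b k))"
    by (simp add: sum.distrib card_PiE uniform_entropy_def sum.swap[of _ "{..<t} \<rightarrow>\<^sub>E UNIV"])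
  also have "\<dots> \<le> uniform_entropy g (tail t) t + (\<Sum>k | m k < t. uniform_entropy g (pmf q k) (m k))"
  proof (intro add_left_mono sum_mono)
    fix k assume k: "k \<in> {k. m k < t}"
    have "pmf q k / 2 ^ m k \<le> 1 / 2 ^ m k"
      by (simp add: divide_right_mono pmf_le_1)
    also have "1 / 2 ^ m k \<le> (1 / 2 ^ m 0 :: real)"
      using strict_mono by (simp add: frac_le strict_mono_less_eq)
    finally have small: "pmf q k / 2 ^ m k \<le> e" using shortest_period by linarith
    show "(\<Sum>b\<in>{..<t} \<rightarrow>\<^sub>E UNIV. g (x b k)) \<le> uniform_entropy g (pmf q k) (m k)"
      unfolding x_def
    proof (rule periodic_pmf_cylinder_entropy_le)
      show "\<And>x y. 0 \<le> x \<Longrightarrow> x \<le> y \<Longrightarrow> y \<le> pmf q k / 2 ^ m k \<Longrightarrow> g x \<le> g y"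
        using small by (intro mono) auto
    qed (use k g0 in auto)
  qed
  finally show ?thesis .
qed

end

section \<open>Regularity of g near zero\<close>

lemma concave_subadditive:
  fixes g :: "real \<Rightarrow> real"
  assumes conc: "concave_on {0..1} g" and g0: "g 0 = 0"
    and xy: "0 \<le> x" "0 \<le> y" "x + y \<le> 1"
  shows "g (x + y) \<le> g x + g y"
proof (cases "x + y = 0")
  case False
  define s where "s = x + y"
  have s: "0 < s" "s \<le> 1" using xy False by (auto simp: s_def)
  have lower: "(u / s) * g s \<le> g u" if "0 \<le> u" "u \<le> s" for u
  proof -
    have "(1 - u / s) * g 0 + (u / s) * g s \<le> g ((1 - u / s) *\<^sub>R 0 + (u / s) *\<^sub>R s)"
      by (rule concave_onD[OF conc]) (use s that in auto)
    then show ?thesis using s g0 by simp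
  qed
  have "g s = (x / s) * g s + (y / s) * g s"
    using s by (simp add: s_def add_divide_distrib[symmetric] distrib_right[symmetric])
  also have "\<dots> \<le> g x + g y"
    using lower[of x] lower[of y] xy by (simp add: s_def add_mono)
  finally show ?thesis by (simp add: s_def)
next
  case True
  then have "x = 0" "y = 0" using xy by auto
  then show ?thesis using g0 by simp
qed

lemma concave_on_le_left:
  fixes g :: "real \<Rightarrow> real"
  assumes conc: "concave_on S g" and "x \<in> S" "z \<in> S" "x \<le> y" "y < z" and gyz: "g y \<le> g z"
  shows "g x \<le> g y"
proof (cases "x = y")
  case False
  define l where "l = (z - y) / (z - x)"
  have l: "0 < l" "l \<le> 1" using assms False by (auto simp: l_def)
  have "l * (z - x) = z - y"
    using assms False by (simp add: l_def)
  then have "y = (1 - l) *\<^sub>R z + l *\<^sub>R x"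
    by (simp add: algebra_simps)
  then have "(1 - l) * g z + l * g x \<le> g y"
    using concave_onD[OF conc, of l z x] l assms by simp
  moreover have "(1 - l) * g y \<le> (1 - l) * g z"
    using l gyz by (intro mult_left_mono) auto
  ultimately have "l * g x \<le> l * g y" by (simp add: algebra_simps)
  then show ?thesis using l by simp
qed simp

lemma G0_mono_near_zero:
  assumes "g \<in> G0" and z: "0 < z" "z \<le> 1" "0 < g z"
  shows "\<exists>e>0. \<forall>x y. 0 \<le> x \<longrightarrow> x \<le> y \<longrightarrow> y \<le> e \<longrightarrow> g x \<le> g y"
proof -
  have conc: "concave_on {0..1} g" and lim: "(g \<longlongrightarrow> 0) (at_right 0)"
    using assms(1) by (auto simp: G0_def)
  have "eventually (\<lambda>y. dist (g y) 0 < g z) (at_right 0)"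
    using lim z(3) by (rule tendstoD)
  then obtain d where d: "d > 0" "\<forall>y>0. y < d \<longrightarrow> \<bar>g y\<bar> < g z"
    by (auto simp: eventually_at_right_field)
  define e where "e = min (d / 2) (z / 2)"
  have "g x \<le> g y" if xy: "0 \<le> x" "x \<le> y" "y \<le> e" for x y
  proof (cases "y = 0")
    case False
    have y: "0 < y" "y < d" "y < z" using xy False d(1) z(1) by (auto simp: e_def)
    then have "g y \<le> g z" using d(2)[rule_format, of y] by (simp add: abs_less_iff)
    moreover have "x \<in> {0..1}" "z \<in> {0..1}" using xy y z by auto
    ultimately show ?thesis using concave_on_le_left[OF conc, of x z y] xy y by blast
  qed (use that in simp)
  moreover have "e > 0" using d z by (simp add: e_def)
  ultimately show ?thesis by blast
qed

lemma G0_inf_eventually_pos: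
  assumes "g \<in> G0_inf"
  shows "eventually (\<lambda>x. 0 < g x) (at_right 0)"
proof -
  have "eventually (\<lambda>x. 1 < g x / eta x) (at_right 0)"
    using assms by (simp add: G0_inf_def filterlim_at_top_dense)
  moreover have "eventually (\<lambda>x. 0 < x \<and> x < 1) (at_right (0::real))"
    by (simp add: eventually_at_right_field) (use zero_less_one in blast)
  ultimately show ?thesis
  proof eventually_elim
    case (elim x)
    then have "0 < eta x" by (simp add: eta_def mult_pos_neg)
    then show "0 < g x" using elim by (metis less_divide_eq_1_pos less_trans)
  qed
qed

lemma log_derivative_growth:
  fixes g :: "real \<Rightarrow> real"
  assumes "0 < x" "x \<le> y"
    and bound: "\<And>z. x \<le> z \<Longrightarrow> z \<le> y \<Longrightarrow> g differentiable (at z) \<and> 0 < g z \<and> z * deriv g z / g z \<le> c"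
  shows "g y \<le> (y / x) powr c * g x"
proof -
  define h where "h z = ln (g z) - c * ln z" for z
  have "h y \<le> h x"
  proof (rule DERIV_nonpos_imp_nonincreasing[OF \<open>x \<le> y\<close>])
    fix z assume z: "x \<le> z" "z \<le> y"
    then have z0: "0 < z" using \<open>0 < x\<close> by simp
    have dg: "DERIV g z :> deriv g z" and gz: "0 < g z"
      using bound[OF z] by (auto simp: DERIV_deriv_iff_real_differentiable)
    have "DERIV h z :> 1 / g z * deriv g z - c * (1 / z)"
      unfolding h_def
      by (intro DERIV_diff DERIV_chain2[OF DERIV_ln_divide[OF gz] dg] DERIV_cmult
          DERIV_ln_divide z0)
    moreover have "1 / g z * deriv g z - c * (1 / z) \<le> 0"
      using bound[OF z] z0 gz by (simp add: field_simps)
    ultimately show "\<exists>d. DERIV h z :> d \<and> d \<le> 0" by blast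
  qed
  then have "ln (g y) \<le> ln (g x) + c * ln (y / x)"
    using assms(1,2) by (simp add: h_def ln_div algebra_simps)
  then have "g y \<le> exp (ln (g x) + c * ln (y / x))"
    using bound[of y] assms(1,2) by (subst ln_le_cancel_iff[symmetric]) auto
  also have "\<dots> = (y / x) powr c * g x"
    using bound[of x] assms(1,2) by (simp add: exp_add powr_def mult.commute)
  finally show ?thesis .
qed

lemma G0_inf_small_scale_regularity:
  assumes G: "g \<in> G0_inf" and diff: "\<forall>x\<in>{0<..<1}. g differentiable (at x)"
    and ls: "Limsup (at_right 0) (\<lambda>x. ereal (x * deriv g x / g x)) < 1"
  obtains c e where "c < 1" "0 < e" "e \<le> 1"
    "\<And>x y. 0 \<le> x \<Longrightarrow> x \<le> y \<Longrightarrow> y \<le> e \<Longrightarrow> g x \<le> g y"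
    "\<And>y. 0 < y \<Longrightarrow> y \<le> e \<Longrightarrow> g y \<le> 2 powr c * g (y / 2)"
proof -
  obtain c where c: "Limsup (at_right 0) (\<lambda>x. ereal (x * deriv g x / g x)) < ereal c" "ereal c < 1"
    using ereal_dense2[OF ls] by blast
  have "eventually (\<lambda>x. x < 1) (at_right (0::real))"
    unfolding eventually_at_right_field by (intro exI[of _ 1]) auto
  then have "eventually (\<lambda>x. 0 < g x \<and> x * deriv g x / g x < c \<and> x < 1) (at_right 0)"
    using G0_inf_eventually_pos[OF G] Limsup_lessD[OF c(1)] by eventually_elim auto
  then obtain b where b: "b > 0" "\<And>y. 0 < y \<Longrightarrow> y < b \<Longrightarrow> 0 < g y \<and> y * deriv g y / g y < c \<and> y < 1"
    by (auto simp: eventually_at_right_field)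
  obtain e1 where e1: "e1 > 0" "\<And>x y. 0 \<le> x \<Longrightarrow> x \<le> y \<Longrightarrow> y \<le> e1 \<Longrightarrow> g x \<le> g y"
    using G0_mono_near_zero[of g "b / 2"] G b(1) b(2)[of "b / 2"] by (auto simp: G0_inf_def)
  define e where "e = min e1 (b / 2)"
  show ?thesis
  proof (rule that[of c e])
    show "c < 1" using c(2) by simp
    fix y assume y: "0 < y" "y \<le> e"
    have "g y \<le> (y / (y / 2)) powr c * g (y / 2)"
    proof (rule log_derivative_growth)
      fix z assume z: "y / 2 \<le> z" "z \<le> y"
      then have "0 < z" "z < b" using y by (auto simp: e_def)
      then show "g differentiable (at z) \<and> 0 < g z \<and> z * deriv g z / g z \<le> c"
        using b(2)[of z] diff by auto
    qed (use y in auto)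
    then show "g y \<le> 2 powr c * g (y / 2)" using y by simp
  qed (use e1 b b(2)[of "b / 2"] in \<open>auto simp: e_def min_le_iff_disj\<close>)
qed

lemma G0_inf_uniform_entropy_superlinear:
  fixes \<gamma> :: real
  assumes "g \<in> G0_inf" and w: "0 < w" "w \<le> 1" and "0 \<le> \<gamma>"
  shows "eventually (\<lambda>N. \<gamma> * N \<le> uniform_entropy g w N) sequentially"
proof -
  define K where "K = \<gamma> / (w * ln 2)"
  have K: "0 \<le> K" using assms by (simp add: K_def)
  have "eventually (\<lambda>x. K < g x / eta x) (at_right 0)"
    using assms(1) by (simp add: G0_inf_def filterlim_at_top_dense)
  then obtain d where d: "d > 0" "\<And>x. 0 < x \<Longrightarrow> x < d \<Longrightarrow> K < g x / eta x"
    by (auto simp: eventually_at_right_field)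
  have "(\<lambda>N. w * (1 / 2) ^ N) \<longlonglongrightarrow> w * 0"
    by (intro tendsto_intros) simp
  then have "eventually (\<lambda>N. w * (1 / 2) ^ N < min d 1) sequentially"
    using d by (intro order_tendstoD) auto
  then show ?thesis
  proof eventually_elim
    case (elim N)
    define x where "x = w / 2 ^ N"
    have x: "0 < x" "x < d" "x < 1" using elim w by (auto simp: x_def power_one_over)
    have eta: "eta x = x * (real N * ln 2 - ln w)"
      using x w by (simp add: eta_def x_def ln_div algebra_simps ln_realpow)
    have "0 < eta x" using x by (simp add: eta_def mult_pos_neg)
    then have "K * eta x < g x" using d x by (simp add: less_divide_eq)
    moreover have "K * (x * (real N * ln 2)) \<le> K * eta x"
      unfolding eta using K x w by (intro mult_left_mono) auto
    moreover have "K * (x * (real N * ln 2)) = \<gamma> * real N / 2 ^ N"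
      using w by (simp add: K_def x_def field_simps)
    ultimately have "\<gamma> * N / 2 ^ N \<le> g x" by linarith
    then show ?case by (simp add: uniform_entropy_def x_def pos_divide_le_eq mult.commute)
  qed
qed

lemma uniform_entropy_ivt:
  fixes \<gamma> :: real
  assumes "g \<in> G0" and cont: "continuous_on {0<..<1} g"
    and w: "0 < w" "w \<le> 1" and "0 < N" "0 < \<gamma>" and big: "\<gamma> * N \<le> uniform_entropy g w N"
  shows "\<exists>w'. 0 < w' \<and> w' \<le> w \<and> uniform_entropy g w' N = \<gamma> * N"
proof -
  have "(g \<longlongrightarrow> 0) (at_right 0)" using assms(1) by (simp add: G0_def)
  moreover have "0 < \<gamma> * N / 2 ^ N" using assms by simp
  ultimately have "eventually (\<lambda>x. g x < \<gamma> * N / 2 ^ N) (at_right 0)"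
    by (intro order_tendstoD)
  then obtain d where d: "d > 0" "\<And>x. 0 < x \<Longrightarrow> x < d \<Longrightarrow> g x < \<gamma> * N / 2 ^ N"
    by (auto simp: eventually_at_right_field)
  define a where "a = min (d / 2) (w / 2 ^ N) * 2 ^ N"
  have a: "0 < a" "a \<le> w" using d w by (auto simp: a_def min_mult_distrib_right)
  have "g (a / 2 ^ N) < \<gamma> * N / 2 ^ N"
    using d w by (intro d(2)) (auto simp: a_def)
  then have small: "uniform_entropy g a N \<le> \<gamma> * N"
    by (simp add: uniform_entropy_def pos_less_divide_eq mult.commute less_imp_le)
  have "continuous_on {a..w} (\<lambda>v. uniform_entropy g v N)"
  proof -
    have "1 < (2::real) ^ N" using \<open>0 < N\<close> by (simp add: one_less_power)
    then have bounds: "0 < a / 2 ^ N" "w / 2 ^ N < 1" using a w by (auto simp: divide_less_eq)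
    have "(\<lambda>v. v / 2 ^ N) ` {a..w} \<subseteq> {0<..<1}"
    proof (rule image_subsetI)
      fix v assume "v \<in> {a..w}"
      then have "a / 2 ^ N \<le> v / 2 ^ N" "v / 2 ^ N \<le> w / 2 ^ N"
        by (simp_all add: divide_right_mono)
      with bounds show "v / 2 ^ N \<in> {0<..<1}" by (simp only: greaterThanLessThan_iff) linarith
    qed
    moreover have "continuous_on {a..w} (\<lambda>v. v / 2 ^ N)"
      by (intro continuous_intros) simp
    ultimately have "continuous_on {a..w} (\<lambda>v. g (v / 2 ^ N))"
      using continuous_on_compose2[OF cont] by blast
    then show ?thesis
      unfolding uniform_entropy_def by (intro continuous_on_mult continuous_on_const)
  qed
  then obtain w' where w': "a \<le> w'" "w' \<le> w" "uniform_entropy g w' N = \<gamma> * N"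
    using IVT'[of "\<lambda>v. uniform_entropy g v N", OF small big a(2)] by blast
  show ?thesis using a w' by (intro exI[of _ w']) auto
qed

lemma uniform_entropy_refine:
  assumes dbl: "\<And>y. 0 < y \<Longrightarrow> y \<le> e \<Longrightarrow> g y \<le> 2 powr c * g (y / 2)"
    and w: "0 < w" "w / 2 ^ t \<le> e"
  shows "uniform_entropy g w t \<le> (2 powr (c - 1)) ^ s * uniform_entropy g w (t + s)"
proof (induction s)
  case (Suc s)
  have "w / 2 ^ (t + s) \<le> w / 2 ^ t"
    using w by (intro divide_left_mono) auto
  then have "g (w / 2 ^ (t + s)) \<le> 2 powr c * g (w / 2 ^ Suc (t + s))"
    using dbl[of "w / 2 ^ (t + s)"] w by (simp add: mult.commute)
  then have "uniform_entropy g w (t + s) \<le> 2 powr (c - 1) * uniform_entropy g w (Suc (t + s))"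
    by (simp add: uniform_entropy_def powr_diff)
  then have "(2 powr (c - 1)) ^ s * uniform_entropy g w (t + s)
      \<le> (2 powr (c - 1)) ^ Suc s * uniform_entropy g w (t + Suc s)"
    by (simp add: mult_left_mono mult.assoc)
  then show ?case using Suc.IH by linarith
qed simp

lemma exists_power_times_linear_le_one:
  fixes \<rho> A b :: real
  assumes "0 \<le> \<rho>" "\<rho> < 1"
  shows "\<exists>L::nat. \<rho> ^ L * (A + b * L) \<le> 1"
proof -
  have "(\<lambda>L. A * \<rho> ^ L + b * (real L * \<rho> ^ L)) \<longlonglongrightarrow> A * 0 + b * 0"
    using assms by (intro tendsto_intros powser_times_n_limit_0) auto
  then have "eventually (\<lambda>L. A * \<rho> ^ L + b * (real L * \<rho> ^ L) < 1) sequentially"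
    by (intro order_tendstoD) auto
  then obtain L where "A * \<rho> ^ L + b * (real L * \<rho> ^ L) < 1"
    by (auto simp: eventually_sequentially)
  then show ?thesis by (intro exI[of _ L]) (simp add: algebra_simps)
qed

section \<open>The construction\<close>

locale entropy_construction =
  fixes g :: "real \<Rightarrow> real" and \<gamma> e c :: real and m0 :: nat
  assumes G0_inf: "g \<in> G0_inf"
    and cont: "continuous_on {0<..<1} g"
    and gamma_pos: "0 < \<gamma>"
    and mono: "\<And>x y. 0 \<le> x \<Longrightarrow> x \<le> y \<Longrightarrow> y \<le> e \<Longrightarrow> g x \<le> g y"
    and doubling: "\<And>y. 0 < y \<Longrightarrow> y \<le> e \<Longrightarrow> g y \<le> 2 powr c * g (y / 2)"
    and c_less_1: "c < 1"
    and e_le_1: "e \<le> 1"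
    and m0_pos: "0 < m0"
    and m0_small: "1 / 2 ^ m0 \<le> e"
begin

definition \<rho> :: real where
  "\<rho> = 2 powr (c - 1)"

lemma rho_pos: "0 < \<rho>" and rho_less_1: "\<rho> < 1"
  using c_less_1 by (auto simp: \<rho>_def powr_less_one)

lemma g0: "g 0 = 0"
  using G0_inf by (simp add: G0_inf_def G0_def)

lemma scale_le_e:
  assumes "0 \<le> w" "w \<le> 1" "m0 \<le> t"
  shows "w / 2 ^ t \<le> e"
proof -
  have "w / 2 ^ t \<le> 1 / 2 ^ t" using assms by (simp add: divide_right_mono)
  also have "\<dots> \<le> 1 / 2 ^ m0" using assms by (simp add: frac_le)
  finally show ?thesis using m0_small by simp
qed

text \<open>A stage (m, W, B) records a period m, the total weight W of the periods from m on, and a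
  bound B for the entropy contributed by the periods before m. The witness L counts the scales
  below the next period N on which the uniform entropy has not yet decayed below \<gamma>; N is taken
  so large that these scales and B cost at most N / (k + 1).\<close>
definition next_stage :: "nat \<Rightarrow> nat \<times> real \<times> real \<Rightarrow> nat \<times> real \<times> real \<Rightarrow> bool" where
  "next_stage k = (\<lambda>(m, W, B) (N, W', B').
     m < N \<and> 0 < W' \<and> W' \<le> W / 2 \<and> uniform_entropy g W' N = \<gamma> * N \<and> B' = B + \<gamma> * N \<and>
     (\<exists>L::nat. \<rho> ^ L * N \<le> 1 \<and> (\<gamma> + \<gamma> * L + B) * (k + 1) + L \<le> N))"

lemma next_stage_exists:
  assumes W: "0 < W" "W \<le> 1" and "0 \<le> B" and "m0 \<le> m"
  shows "\<exists>s. next_stage k (m, W, B) s"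
proof -
  obtain N1 where N1: "\<And>N. N1 \<le> N \<Longrightarrow> \<gamma> * N \<le> uniform_entropy g (W / 2) N"
    using G0_inf_uniform_entropy_superlinear[OF G0_inf, of "W / 2" \<gamma>] W gamma_pos
    by (auto simp: eventually_sequentially)
  define A where "A = real N1 + real m + 2 + (\<gamma> + B) * (k + 1)"
  define b where "b = \<gamma> * (k + 1) + 1"
  \<comment> \<open>N will grow only linearly in L, so L can be chosen with \<rho> ^ L * N \<le> 1\<close>
  obtain L :: nat where L: "\<rho> ^ L * (A + b * L) \<le> 1"
    using exists_power_times_linear_le_one[OF less_imp_le[OF rho_pos] rho_less_1] by blast
  define X where "X = (\<gamma> + \<gamma> * L + B) * (k + 1) + L"
  define N where "N = max (max N1 (m + 1)) (nat \<lceil>X\<rceil>)"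
  have "0 \<le> X" using gamma_pos \<open>0 \<le> B\<close> by (simp add: X_def)
  have NX: "X \<le> N" unfolding N_def of_nat_max by linarith
  have "N \<le> A + b * L"
  proof -
    have "real (nat \<lceil>X\<rceil>) \<le> X + 1" using \<open>0 \<le> X\<close> by linarith
    moreover have "X + 1 \<le> A + b * L - N1 - m - 1"
      by (simp add: X_def A_def b_def algebra_simps)
    moreover have "real N \<le> N1 + real (m + 1) + real (nat \<lceil>X\<rceil>)"
      unfolding N_def of_nat_max by linarith
    ultimately show ?thesis by simp
  qed
  then have "\<rho> ^ L * N \<le> \<rho> ^ L * (A + b * L)"
    using rho_pos by (intro mult_left_mono) auto
  then have "\<rho> ^ L * N \<le> 1" using L by linarith
  moreover have N: "N1 \<le> N" "m < N" "m0 \<le> N" using \<open>m0 \<le> m\<close> by (auto simp: N_def)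
  moreover obtain W' where "0 < W'" "W' \<le> W / 2" "uniform_entropy g W' N = \<gamma> * N"
    using uniform_entropy_ivt[OF _ cont, of "W / 2" N \<gamma>] G0_inf N1[OF N(1)] W N m0_pos gamma_pos
    by (auto simp: G0_inf_def)
  ultimately show ?thesis
    using NX unfolding X_def by (intro exI[of _ "(N, W', B + \<gamma> * N)"]) (auto simp: next_stage_def)
qed

primrec stage :: "nat \<Rightarrow> nat \<times> real \<times> real" where
  "stage 0 = (m0, 1, uniform_entropy g 1 m0)"
| "stage (Suc k) = (SOME s. next_stage k (stage k) s)"

definition period :: "nat \<Rightarrow> nat" where "period k = fst (stage k)"
definition tail_mass :: "nat \<Rightarrow> real" where "tail_mass k = fst (snd (stage k))"
definition budget :: "nat \<Rightarrow> real" where "budget k = snd (snd (stage k))"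

lemma stage_eq: "stage k = (period k, tail_mass k, budget k)"
  by (simp add: period_def tail_mass_def budget_def)

lemma stage_invariant:
  "0 < tail_mass k \<and> tail_mass k \<le> 1 \<and> 0 \<le> budget k \<and> m0 \<le> period k \<and>
   next_stage k (stage k) (stage (Suc k))"
proof (induction k)
  case 0
  have "0 \<le> uniform_entropy g 1 m0"
    using mono[of 0 "1 / 2 ^ m0"] g0 m0_small by (simp add: uniform_entropy_def)
  then have inv: "0 < tail_mass 0" "tail_mass 0 \<le> 1" "0 \<le> budget 0" "m0 \<le> period 0"
    by (auto simp: tail_mass_def budget_def period_def)
  then have "\<exists>s. next_stage 0 (stage 0) s" unfolding stage_eq by (intro next_stage_exists)
  then show ?case using inv by (simp add: someI_ex)
next
  case (Suc k)
  then have inv: "0 < tail_mass (Suc k)" "tail_mass (Suc k) \<le> 1" "0 \<le> budget (Suc k)"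
    "m0 \<le> period (Suc k)"
    using gamma_pos unfolding stage_eq next_stage_def by auto
  then have "\<exists>s. next_stage (Suc k) (stage (Suc k)) s"
    unfolding stage_eq by (intro next_stage_exists)
  then show ?case using inv by (simp add: someI_ex)
qed

lemma next_stage_stage:
  "next_stage k (period k, tail_mass k, budget k)
     (period (Suc k), tail_mass (Suc k), budget (Suc k))"
  using stage_invariant[of k] by (simp add: stage_eq[symmetric])

lemma tail_mass_pos: "0 < tail_mass k"
  and tail_mass_le_1: "tail_mass k \<le> 1"
  and budget_nonneg: "0 \<le> budget k"
  and period_ge_m0: "m0 \<le> period k"
  using stage_invariant[of k] by auto

lemma period_0: "period 0 = m0"
  and tail_mass_0: "tail_mass 0 = 1"
  and budget_0: "budget 0 = uniform_entropy g 1 m0"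
  by (simp_all add: period_def tail_mass_def budget_def)

lemma period_less: "period k < period (Suc k)"
  and tail_mass_halves: "tail_mass (Suc k) \<le> tail_mass k / 2"
  and uniform_entropy_at_period:
    "uniform_entropy g (tail_mass (Suc k)) (period (Suc k)) = \<gamma> * period (Suc k)"
  and budget_Suc: "budget (Suc k) = budget k + \<gamma> * period (Suc k)"
  and period_large: "\<exists>L::nat. \<rho> ^ L * period (Suc k) \<le> 1 \<and>
      (\<gamma> + \<gamma> * L + budget k) * (k + 1) + L \<le> period (Suc k)"
  using next_stage_stage[of k] by (simp_all add: next_stage_def)

lemma strict_mono_period: "strict_mono period"
  by (simp add: strict_mono_Suc_iff period_less)

lemma budget_le_period: "(\<gamma> + budget k) * (k + 1) \<le> period (Suc k)"
proof -
  obtain L :: nat where "(\<gamma> + \<gamma> * L + budget k) * (k + 1) + L \<le> period (Suc k)"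
    using period_large by blast
  moreover have "(\<gamma> + budget k) * (k + 1) \<le> (\<gamma> + \<gamma> * L + budget k) * (k + 1)"
    using gamma_pos by (intro mult_right_mono) auto
  ultimately show ?thesis by linarith
qed

lemma tail_mass_limit: "tail_mass \<longlonglongrightarrow> 0"
proof (rule tendsto_sandwich[of "\<lambda>_. 0" _ _ "\<lambda>k. (1 / 2) ^ k"])
  have "tail_mass k \<le> (1 / 2) ^ k" for k
  proof (induction k)
    case (Suc k)
    moreover have "(1 / 2 :: real) ^ Suc k = (1 / 2) ^ k / 2" by simp
    ultimately show ?case using tail_mass_halves[of k] by linarith
  qed (simp add: tail_mass_0)
  then show "\<forall>\<^sub>F k in sequentially. tail_mass k \<le> (1 / 2) ^ k" by simp
  show "\<forall>\<^sub>F k in sequentially. 0 \<le> tail_mass k" using tail_mass_pos by (simp add: less_imp_le)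
  show "(\<lambda>k. (1 / 2 :: real) ^ k) \<longlonglongrightarrow> 0" by (rule LIMSEQ_power_zero) simp
qed simp

definition weights :: "nat pmf" where
  "weights = embed_pmf (\<lambda>k. tail_mass k - tail_mass (Suc k))"

lemma pmf_weights: "pmf weights k = tail_mass k - tail_mass (Suc k)"
proof -
  have nonneg: "0 \<le> tail_mass k - tail_mass (Suc k)" for k
    using tail_mass_halves[of k] tail_mass_pos[of k] by simp
  have sums: "(\<lambda>k. tail_mass k - tail_mass (Suc k)) sums 1"
    using telescope_sums'[OF tail_mass_limit] by (simp add: tail_mass_0)
  have "(\<integral>\<^sup>+k. ennreal (tail_mass k - tail_mass (Suc k)) \<partial>count_space UNIV) = 1"
    using nonneg sums by (simp add: nn_integral_count_space_nat suminf_ennreal2 sums_iff)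
  then show ?thesis
    unfolding weights_def by (rule pmf_embed_pmf[OF nonneg])
qed

lemma measure_weights_tail: "measure weights {k. j \<le> k} = tail_mass j"
proof -
  have "{k. j \<le> k} = UNIV - {..<j}" by auto
  then have "measure weights {k. j \<le> k} = 1 - measure weights {..<j}"
    using measure_pmf.prob_compl[of "{..<j}" weights] by simp
  also have "measure weights {..<j} = (\<Sum>i<j. tail_mass i - tail_mass (Suc i))"
    by (simp add: measure_measure_pmf_finite pmf_weights)
  also have "\<dots> = tail_mass 0 - tail_mass j" by (rule sum_lessThan_telescope')
  finally show ?thesis by (simp add: tail_mass_0)
qed

abbreviation \<mu> :: "(int \<Rightarrow> nat) pmf" where
  "\<mu> \<equiv> periodic_mixture period weights"

sublocale periodic_mixture_bounds g e period weights
proof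
  show "g (x + y) \<le> g x + g y" if "0 \<le> x" "0 \<le> y" "x + y \<le> e" for x y
    using G0_inf e_le_1 that by (intro concave_subadditive) (auto simp: G0_inf_def G0_def)
qed (use mono g0 strict_mono_period m0_small period_0 in auto)

lemma tail_between_periods:
  assumes "period k < t" "t \<le> period (Suc k)"
  shows "tail t = tail_mass (Suc k)" and "{i. period i < t} = {..k}"
proof -
  have iff: "period i < t \<longleftrightarrow> i \<le> k" for i
  proof
    assume "period i < t"
    then have "period i < period (Suc k)" using assms by simp
    then show "i \<le> k" using strict_mono_period by (simp add: strict_mono_less)
  next
    assume "i \<le> k"
    then have "period i \<le> period k" using strict_mono_period by (simp add: strict_mono_less_eq)
    then show "period i < t" using assms by simp
  qed
  have "{i. t \<le> period i} = {i. Suc k \<le> i}"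
  proof (intro set_eqI iffI; simp)
    fix i show "t \<le> period i \<Longrightarrow> Suc k \<le> i" "Suc k \<le> i \<Longrightarrow> t \<le> period i"
      using iff[of i] by linarith+
  qed
  then show "tail t = tail_mass (Suc k)" by (simp add: tail_def measure_weights_tail)
  show "{i. period i < t} = {..k}" by (simp add: iff atMost_def)
qed

lemma cylinder_entropy_at_period: "\<gamma> * period (Suc k) \<le> cylinder_entropy g \<mu> (period (Suc k))"
proof -
  have "tail (period (Suc k)) = tail_mass (Suc k)"
    using strict_mono_period by (simp add: tail_def measure_weights_tail strict_mono_less_eq)
  moreover have "uniform_entropy g (tail (period (Suc k))) (period (Suc k))
      \<le> cylinder_entropy g \<mu> (period (Suc k))"
    using period_0 period_ge_m0 by (intro cylinder_entropy_lower) simp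
  ultimately show ?thesis using uniform_entropy_at_period[of k] by simp
qed

lemma short_periods_entropy_le_budget:
  "(\<Sum>i\<le>k. uniform_entropy g (pmf weights i) (period i)) \<le> budget k"
proof (induction k)
  case 0
  have "g (pmf weights 0 / 2 ^ m0) \<le> g (1 / 2 ^ m0)"
    using m0_small by (intro mono) (auto simp: divide_right_mono pmf_le_1)
  then show ?case by (simp add: period_0 budget_0 uniform_entropy_def)
next
  case (Suc k)
  have "pmf weights (Suc k) \<le> tail_mass (Suc k)"
    using tail_mass_pos[of "Suc (Suc k)"] by (simp add: pmf_weights)
  then have "g (pmf weights (Suc k) / 2 ^ period (Suc k))
      \<le> g (tail_mass (Suc k) / 2 ^ period (Suc k))"
    using tail_mass_le_1[of "Suc k"] period_ge_m0[of "Suc k"] tail_mass_pos[of "Suc k"]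
    by (intro mono scale_le_e divide_right_mono) auto
  then have "uniform_entropy g (pmf weights (Suc k)) (period (Suc k))
      \<le> uniform_entropy g (tail_mass (Suc k)) (period (Suc k))"
    by (simp add: uniform_entropy_def)
  then have "uniform_entropy g (pmf weights (Suc k)) (period (Suc k)) \<le> \<gamma> * period (Suc k)"
    using uniform_entropy_at_period[of k] by simp
  then show ?case using Suc by (simp add: budget_Suc)
qed

lemma cylinder_entropy_between_periods:
  assumes "period k < t" "t \<le> period (Suc k)"
  shows "cylinder_entropy g \<mu> t \<le> uniform_entropy g (tail_mass (Suc k)) t + budget k"
proof -
  have "period 0 \<le> period k" using strict_mono_period by (simp add: strict_mono_less_eq)
  then have "period 0 \<le> t" using assms by simp
  then have "cylinder_entropy g \<mu> t \<le>
      uniform_entropy g (tail t) t +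
      (\<Sum>i | period i < t. uniform_entropy g (pmf weights i) (period i))"
    by (rule cylinder_entropy_upper)
  also have "\<dots> = uniform_entropy g (tail_mass (Suc k)) t +
      (\<Sum>i\<le>k. uniform_entropy g (pmf weights i) (period i))"
    by (simp only: tail_between_periods[OF assms])
  finally show ?thesis using short_periods_entropy_le_budget[of k] by linarith
qed

text \<open>Below the next period N the uniform entropy is at most \<rho> ^ (N - t) \<gamma> N: negligible
  except in the last L scales, where it is at most \<gamma> (t + L).\<close>
lemma cylinder_entropy_ratio:
  assumes "1 \<le> k" and t: "period k < t" "t \<le> period (Suc k)"
  shows "cylinder_entropy g \<mu> t \<le> (\<gamma> + 1 / k) * t"
proof -
  define N where "N = period (Suc k)"
  obtain L :: nat where L: "\<rho> ^ L * N \<le> 1" "(\<gamma> + \<gamma> * L + budget k) * (k + 1) + L \<le> N"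
    using period_large[of k] by (auto simp: N_def)
  have "uniform_entropy g (tail_mass (Suc k)) t
      \<le> \<rho> ^ (N - t) * uniform_entropy g (tail_mass (Suc k)) (t + (N - t))"
    unfolding \<rho>_def
  proof (rule uniform_entropy_refine[where g=g and c=c and e=e, OF doubling tail_mass_pos])
    show "tail_mass (Suc k) / 2 ^ t \<le> e"
      using period_ge_m0[of k] t tail_mass_pos[of "Suc k"] tail_mass_le_1[of "Suc k"]
      by (intro scale_le_e) auto
  qed
  then have U: "uniform_entropy g (tail_mass (Suc k)) t \<le> \<rho> ^ (N - t) * (\<gamma> * N)"
    using t uniform_entropy_at_period[of k] by (simp add: N_def)
  have "uniform_entropy g (tail_mass (Suc k)) t + budget k \<le> \<gamma> * t + t / k"
  proof (cases "L \<le> N - t")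
    case True
    have "\<rho> ^ (N - t) * N \<le> \<rho> ^ L * N"
      using True rho_pos rho_less_1 by (intro mult_right_mono power_decreasing) auto
    then have "\<rho> ^ (N - t) * (\<gamma> * N) \<le> \<gamma> * (\<rho> ^ L * N)"
      using gamma_pos by (simp add: mult.left_commute)
    also have "\<dots> \<le> \<gamma>" using L(1) gamma_pos by (simp add: mult_left_le)
    finally have "uniform_entropy g (tail_mass (Suc k)) t \<le> \<gamma>" using U by linarith
    moreover obtain j where j: "k = Suc j" using \<open>1 \<le> k\<close> by (cases k) auto
    then have "(\<gamma> + budget j) * k \<le> period k" using budget_le_period[of j] by simp
    then have "\<gamma> + budget j \<le> t / k" using t \<open>1 \<le> k\<close> by (simp add: pos_le_divide_eq)
    moreover have "budget k = budget j + \<gamma> * period k" using budget_Suc[of j] j by simp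
    moreover have "\<gamma> * period k \<le> \<gamma> * t" using gamma_pos t by simp
    ultimately show ?thesis by linarith
  next
    case False
    then have "N < t + L" using t by (simp add: N_def)
    have "\<rho> ^ (N - t) * (\<gamma> * N) \<le> \<gamma> * N"
      using rho_pos rho_less_1 gamma_pos by (intro mult_left_le_one_le) (auto simp: power_le_one)
    also have "\<gamma> * N \<le> \<gamma> * t + \<gamma> * L"
      using \<open>N < t + L\<close> gamma_pos by (simp add: distrib_left[symmetric])
    finally have U': "uniform_entropy g (tail_mass (Suc k)) t \<le> \<gamma> * t + \<gamma> * L" using U by linarith
    have "(\<gamma> * L + budget k) * (k + 1) \<le> (\<gamma> + \<gamma> * L + budget k) * (k + 1)"
      using gamma_pos by (intro mult_right_mono) auto
    then have "(\<gamma> * L + budget k) * (k + 1) \<le> t"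
      using L(2) \<open>N < t + L\<close> by linarith
    moreover have "(\<gamma> * L + budget k) * k \<le> (\<gamma> * L + budget k) * (k + 1)"
      using gamma_pos budget_nonneg[of k] by (intro mult_left_mono) auto
    ultimately have "\<gamma> * L + budget k \<le> t / k"
      using \<open>1 \<le> k\<close> by (simp add: pos_le_divide_eq)
    with U' show ?thesis by linarith
  qed
  moreover have "(\<gamma> + 1 / k) * t = \<gamma> * t + t / k" by (simp add: distrib_right)
  ultimately show ?thesis using cylinder_entropy_between_periods[OF t] by linarith
qed

lemma exists_period_interval:
  assumes "period K < n"
  obtains k where "K \<le> k" "period k < n" "n \<le> period (Suc k)"
proof -
  define j where "j = (LEAST j. n \<le> period j)"
  have j: "n \<le> period j"
    unfolding j_def by (rule LeastI_ex) (use seq_suble[OF strict_mono_period, of n] in blast)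
  have below: "period i < n" if "i < j" for i
    using not_less_Least[OF that[unfolded j_def]] by simp
  have "K < j"
  proof (rule ccontr)
    assume "\<not> K < j"
    then have "period j \<le> period K" using strict_mono_period by (simp add: strict_mono_less_eq)
    then show False using j assms by simp
  qed
  then obtain k where "j = Suc k" by (cases j) auto
  then show ?thesis using j below[of k] \<open>K < j\<close> by (intro that[of k]) auto
qed

lemma limsup_cylinder_entropy: "limsup (\<lambda>n. ereal (cylinder_entropy g \<mu> n / n)) = ereal \<gamma>"
proof (rule antisym)
  show "limsup (\<lambda>n. ereal (cylinder_entropy g \<mu> n / n)) \<le> ereal \<gamma>"
  proof (rule ereal_le_epsilon2)
    fix \<epsilon> :: real assume "0 < \<epsilon>"
    obtain K :: nat where K: "1 / \<epsilon> < K" using reals_Archimedean2 by blast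
    moreover have "0 < 1 / \<epsilon>" using \<open>0 < \<epsilon>\<close> by simp
    ultimately have "0 < real K" by linarith
    then have "1 \<le> K" "1 / K < \<epsilon>"
      using K \<open>0 < \<epsilon>\<close> by (auto simp: divide_less_eq mult.commute)
    have "cylinder_entropy g \<mu> n / n \<le> \<gamma> + \<epsilon>" if n: "period K < n" for n
    proof -
      obtain k where k: "K \<le> k" "period k < n" "n \<le> period (Suc k)"
        using exists_period_interval[OF n] by blast
      have "1 / real k \<le> 1 / K" using k(1) \<open>1 \<le> K\<close> by (simp add: frac_le)
      then have "(\<gamma> + 1 / k) * n \<le> (\<gamma> + \<epsilon>) * n"
        using \<open>1 / K < \<epsilon>\<close> by (intro mult_right_mono) auto
      moreover have "cylinder_entropy g \<mu> n \<le> (\<gamma> + 1 / k) * n"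
        using k \<open>1 \<le> K\<close> by (intro cylinder_entropy_ratio) auto
      ultimately have "cylinder_entropy g \<mu> n \<le> (\<gamma> + \<epsilon>) * n" by linarith
      then show ?thesis using k by (simp add: pos_divide_le_eq)
    qed
    then have "limsup (\<lambda>n. ereal (cylinder_entropy g \<mu> n / n)) \<le> ereal (\<gamma> + \<epsilon>)"
      by (intro Limsup_bounded)
         (auto simp: eventually_sequentially intro: exI[of _ "Suc (period K)"])
    then show "limsup (\<lambda>n. ereal (cylinder_entropy g \<mu> n / n)) \<le> ereal \<gamma> + ereal \<epsilon>" by simp
  qed
  have "ereal \<gamma> \<le> limsup ((\<lambda>n. ereal (cylinder_entropy g \<mu> n / n)) \<circ> (\<lambda>k. period (Suc k)))"
  proof (intro le_Limsup always_eventually allI)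
    fix k
    have "0 < real (period (Suc k))" using period_ge_m0[of "Suc k"] m0_pos by simp
    then show "ereal \<gamma> \<le> ((\<lambda>n. ereal (cylinder_entropy g \<mu> n / n)) \<circ> (\<lambda>k. period (Suc k))) k"
      using cylinder_entropy_at_period[of k] by (simp add: pos_le_divide_eq)
  qed simp
  also have "\<dots> \<le> limsup (\<lambda>n. ereal (cylinder_entropy g \<mu> n / n))"
    by (rule limsup_subseq_mono) (simp add: strict_mono_Suc_iff period_less)
  finally show "ereal \<gamma> \<le> limsup (\<lambda>n. ereal (cylinder_entropy g \<mu> n / n))" .
qed

lemma shift_process:
  "prob_space (measure_pmf \<mu>) \<and> mp_automorphism (measure_pmf \<mu>) shift \<and>
   finite_meas_partition (measure_pmf \<mu>) zero_partition \<and>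
   h_g g (measure_pmf \<mu>) shift zero_partition = ereal \<gamma>"
proof (intro conjI)
  have "0 < period k" for k using period_ge_m0[of k] m0_pos by simp
  then show "mp_automorphism (measure_pmf \<mu>) shift"
    by (intro mp_automorphism_pmf bij_shift map_shift_periodic_mixture)
  show "h_g g (measure_pmf \<mu>) shift zero_partition = ereal \<gamma>"
    unfolding h_g_def H_g_zero_partition by (rule limsup_cylinder_entropy)
qed (simp_all add: prob_space_measure_pmf finite_meas_partition_zero_partition)

end

lemma iter_join_trivial_partition:
  "iter_join (measure_pmf p) T {UNIV} n = {UNIV}"
  unfolding iter_join_def by (auto intro!: exI[of _ "\<lambda>_. UNIV"])

lemma zero_entropy_process:
  "\<exists>(M :: (int \<Rightarrow> nat) measure) T P.
     prob_space M \<and> mp_automorphism M T \<and> finite_meas_partition M P \<and> h_g g M T P = 0"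
proof -
  define p :: "(int \<Rightarrow> nat) pmf" where "p = return_pmf (\<lambda>_. 0)"
  have "h_g g (measure_pmf p) shift {UNIV} = limsup (\<lambda>n. ereal (g 1 / real n))"
    unfolding h_g_def H_g_def iter_join_trivial_partition by (simp add: measure_pmf.prob_space)
  also have "\<dots> = 0"
    by (intro lim_imp_Limsup tendsto_eq_intros lim_const_over_n) simp_all
  finally have "h_g g (measure_pmf p) shift {UNIV} = 0" .
  moreover have "mp_automorphism (measure_pmf p) shift"
    by (intro mp_automorphism_pmf bij_shift) (simp add: p_def shift_def)
  moreover have "finite_meas_partition (measure_pmf p) {UNIV}"
    unfolding finite_meas_partition_def disjoint_def by auto
  ultimately show ?thesis using prob_space_measure_pmf by blast
qed

theorem mainTheorem11:
  fixes g :: "real \<Rightarrow> real" and \<gamma> :: real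
  assumes "g \<in> G0_inf"
    and "\<forall>x\<in>{0<..<1}. g differentiable (at x)"
    and "Limsup (at_right 0) (\<lambda>x. ereal (x * deriv g x / g x)) < 1"
    and "\<gamma> \<ge> 0"
  shows "\<exists>(M :: (int \<Rightarrow> nat) measure) T P.
           prob_space M \<and> mp_automorphism M T \<and> finite_meas_partition M P \<and>
           h_g g M T P = ereal \<gamma>"
proof (cases "\<gamma> = 0")
  case True
  then show ?thesis using zero_entropy_process by (simp add: zero_ereal_def)
next
  case False
  obtain c e where "c < 1" "0 < e" "e \<le> 1"
    "\<And>x y. 0 \<le> x \<Longrightarrow> x \<le> y \<Longrightarrow> y \<le> e \<Longrightarrow> g x \<le> g y"
    "\<And>y. 0 < y \<Longrightarrow> y \<le> e \<Longrightarrow> g y \<le> 2 powr c * g (y / 2)"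
    using G0_inf_small_scale_regularity[OF assms(1-3)] by blast
  moreover obtain n :: nat where "(1 / 2) ^ n < e"
    using real_arch_pow_inv[OF \<open>0 < e\<close>, of "1 / 2"] by auto
  then have "1 / 2 ^ n \<le> e" "0 < n"
    using \<open>e \<le> 1\<close> by (cases n; simp add: power_one_over)+
  moreover have "continuous_on {0<..<1} g"
    using assms(2)
    by (intro continuous_at_imp_continuous_on) (auto intro: differentiable_imp_continuous_within)
  ultimately interpret entropy_construction g \<gamma> e c n
    using assms False by unfold_locales auto
  show ?thesis using shift_process by blast
qed

end
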